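(* Consider the following convex (second-order cone) optimal control problem for $N$ electric vehicles (EVs) charged through a single transformer over $K$ time steps $k=0,\dots,K-1$. The decision variables are the charging currents $i_n(k)$, states of charge $s_n(k+1)$ ($n=1,\dots,N$), total currents $i_{\text{total}}(k)$, auxiliary variables $e(k)$, and transformer temperatures $T(k+1)$: \begin{align*} \min\;& \sum_{n=1}^N\sum_{k=0}^{K-1} q_n\,(s_n(k+1)-1)^2 + r_n\,(i_n(k))^2\\ \text{s.t. }& T(k+1)=\tau T(k)+\gamma e(k)+\rho T_a(k),\\ & e(k)\ge (i_{\text{total}}(k))^2,\\ & s_n(k+1)=s_n(k)+\eta_n i_n(k),\\ & i_{\text{total}}(k)=i_d(k)+\sum_{n=1}^N i_n(k),\\ & T(k+1)\le T^{\max},\\ & s_n(k+1)\in[\hat s_n(k+1),\,1],\\ & i_n(k)\in[0,\,i_n^{\max}],\\ & T(0)=T_{\text{meas}},\quad s_n(0)=s_{\text{meas},n}, \end{align*} for all $k=0,\dots,K-1$ and $n=1,\dots,N$. Fix EV parameters $r_n\ge 0$ and $\eta_n,q_n>0$. When $r_n>0$, let $M_n\doteq \frac{q_n}{r_n}\eta_n^2$. Suppose that at an optimal solution of this problem there exist an index $n$ and a time step $k$ such that $i_n(k)<i_n^{\max}$ and $$s_n(k+1)<\begin{cases}1 & \text{if } r_n=0,\\[2pt] \dfrac{M_n+s_n(0)}{M_n+1} & \text{if } r_n>0.\end{cases}$$ Then $e(l)=(i_{\text{total}}(l))^2$ for all $l\le k$.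
   Context: The problem arises from a discrete-time transformer hot-spot temperature model $T(k+1)=\tau T(k)+\gamma (i_{\text{total}}(k))^2+\rho T_a(k)$, in which the quadratic equality has been relaxed to the epigraph inequality $e(k)\ge (i_{\text{total}}(k))^2$. The parameters are as follows: - $\tau=e^{-b\Delta t}\in(0,1)$ for some $b,\Delta t>0$, and $\rho=1-\tau$; - $\gamma>0$; - $T_a(k)$ is a given (shifted) ambient temperature sequence; - $i_d(k)\ge 0$ is a given background current; - $T^{\max}$ is the transformer temperature limit; - $i_n^{\max}>0$ is the current limit of EV $n$; - $\eta_n>0$ is the normalized charging ratio of EV $n$; - $s_{\text{meas},n}\in[0,1]$ is the measured initial state of charge and $T_{\text{meas}}$ the measured initial temperature; - $\hat s_n(k+1)=\bar s_n$ if $k+1\ge \bar k_n$ and $\hat s_n(k+1)=0$ otherwise, where $\bar s_n\in[0,1]$ is a minimum required state of charge and $\bar k_n\in\{0,\dots,K\}$ the latest time step by which it must be reached. *)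

theory Defs
  imports Complex_Main
begin

text \<open>EVs are indexed by n < N (0-based), time steps by k < K.
  Variables: i n k (charging current), s n k (state of charge, k = 0..K),
  itot k, e k (k < K), T k (k = 0..K).\<close>

definition shat :: "(nat \<Rightarrow> real) \<Rightarrow> (nat \<Rightarrow> nat) \<Rightarrow> nat \<Rightarrow> nat \<Rightarrow> real" where
  "shat sbar kbar n j = (if kbar n \<le> j then sbar n else 0)"

definition feasible ::
  "nat \<Rightarrow> nat \<Rightarrow> real \<Rightarrow> real \<Rightarrow> real \<Rightarrow> (nat \<Rightarrow> real) \<Rightarrow> (nat \<Rightarrow> real) \<Rightarrow> real
   \<Rightarrow> (nat \<Rightarrow> real) \<Rightarrow> (nat \<Rightarrow> real) \<Rightarrow> (nat \<Rightarrow> real) \<Rightarrow> real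
   \<Rightarrow> (nat \<Rightarrow> real) \<Rightarrow> (nat \<Rightarrow> nat)
   \<Rightarrow> (nat \<Rightarrow> nat \<Rightarrow> real) \<Rightarrow> (nat \<Rightarrow> nat \<Rightarrow> real) \<Rightarrow> (nat \<Rightarrow> real) \<Rightarrow> (nat \<Rightarrow> real)
   \<Rightarrow> (nat \<Rightarrow> real) \<Rightarrow> bool" where
  "feasible N K tau gamma rho Ta idc Tmax imax eta smeas Tmeas sbar kbar i s itot e T \<longleftrightarrow>
     T 0 = Tmeas \<and> (\<forall>n<N. s n 0 = smeas n) \<and>
     (\<forall>k<K.
        T (Suc k) = tau * T k + gamma * e k + rho * Ta k \<and>
        e k \<ge> (itot k)\<^sup>2 \<and>
        itot k = idc k + (\<Sum>n<N. i n k) \<and>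
        T (Suc k) \<le> Tmax \<and>
        (\<forall>n<N. s n (Suc k) = s n k + eta n * i n k \<and>
               shat sbar kbar n (Suc k) \<le> s n (Suc k) \<and> s n (Suc k) \<le> 1 \<and>
               0 \<le> i n k \<and> i n k \<le> imax n))"

definition cost ::
  "nat \<Rightarrow> nat \<Rightarrow> (nat \<Rightarrow> real) \<Rightarrow> (nat \<Rightarrow> real)
   \<Rightarrow> (nat \<Rightarrow> nat \<Rightarrow> real) \<Rightarrow> (nat \<Rightarrow> nat \<Rightarrow> real) \<Rightarrow> real" where
  "cost N K q r i s = (\<Sum>n<N. \<Sum>k<K. q n * (s n (Suc k) - 1)\<^sup>2 + r n * (i n k)\<^sup>2)"

definition optimal ::
  "nat \<Rightarrow> nat \<Rightarrow> real \<Rightarrow> real \<Rightarrow> real \<Rightarrow> (nat \<Rightarrow> real) \<Rightarrow> (nat \<Rightarrow> real) \<Rightarrow> real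
   \<Rightarrow> (nat \<Rightarrow> real) \<Rightarrow> (nat \<Rightarrow> real) \<Rightarrow> (nat \<Rightarrow> real) \<Rightarrow> real
   \<Rightarrow> (nat \<Rightarrow> real) \<Rightarrow> (nat \<Rightarrow> nat) \<Rightarrow> (nat \<Rightarrow> real) \<Rightarrow> (nat \<Rightarrow> real)
   \<Rightarrow> (nat \<Rightarrow> nat \<Rightarrow> real) \<Rightarrow> (nat \<Rightarrow> nat \<Rightarrow> real) \<Rightarrow> (nat \<Rightarrow> real) \<Rightarrow> (nat \<Rightarrow> real)
   \<Rightarrow> (nat \<Rightarrow> real) \<Rightarrow> bool" where
  "optimal N K tau gamma rho Ta idc Tmax imax eta smeas Tmeas sbar kbar q r i s itot e T \<longleftrightarrow>
     feasible N K tau gamma rho Ta idc Tmax imax eta smeas Tmeas sbar kbar i s itot e T \<and>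
     (\<forall>i' s' itot' e' T'.
        feasible N K tau gamma rho Ta idc Tmax imax eta smeas Tmeas sbar kbar i' s' itot' e' T' \<longrightarrow>
        cost N K q r i s \<le> cost N K q r i' s')"

end

theory Submission
  imports Defs
begin

text \<open>Suppose \<open>e l > itot l\<^sup>2\<close> for some \<open>l \<le> k\<close>. Removing this slack \<open>d\<close> at step \<open>l\<close> and
  adding \<open>d * tau ^ (k - l)\<close> at step \<open>k\<close> cools the transformer on \<open>(l, k]\<close> and leaves every later
  temperature unchanged, so the slack can be moved to step \<open>k\<close>. There EV \<open>n\<close> may then charge
  \<open>eps\<close> more; afterwards its state of charge is lifted to at least \<open>s n (Suc k) + eta n * eps\<close>,
  which only reduces its later currents and its later distance to full charge. The hypothesis on
  \<open>s n (Suc k)\<close> says precisely that the marginal cost of charging at step \<open>k\<close> is negative, so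
  a small \<open>eps\<close> yields a cheaper feasible schedule, contradicting optimality.\<close>

primrec temperature ::
  "real \<Rightarrow> real \<Rightarrow> real \<Rightarrow> (nat \<Rightarrow> real) \<Rightarrow> (nat \<Rightarrow> real) \<Rightarrow> nat \<Rightarrow> real" where
  "temperature T0 tau gamma w e 0 = T0"
| "temperature T0 tau gamma w e (Suc j) =
     tau * temperature T0 tau gamma w e j + gamma * e j + w j"

lemma temperature_shift_heat:
  assumes "l \<le> k"
  shows "temperature T0 tau gamma w
           (\<lambda>m. e m - (if m = l then d else 0) + (if m = k then d * tau ^ (k - l) else 0)) j
         = temperature T0 tau gamma w e j
           - (if l < j \<and> j \<le> k then gamma * d * tau ^ (j - Suc l) else 0)"
proof (induction j)
  case 0
  show ?case by simp
next
  case (Suc j)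
  have tau_pow: "tau ^ (m - l) = tau * tau ^ (m - Suc l)" if "l < m" for m
    using that by (metis Suc_diff_Suc power_Suc)
  show ?case
    unfolding temperature.simps Suc.IH using assms tau_pow by (auto simp: algebra_simps)
qed

lemma temperature_shift_heat_le:
  assumes "l \<le> k" and "tau \<ge> 0" and "gamma \<ge> 0" and "d \<ge> 0"
  shows "temperature T0 tau gamma w
           (\<lambda>m. e m - (if m = l then d else 0) + (if m = k then d * tau ^ (k - l) else 0)) j
         \<le> temperature T0 tau gamma w e j"
  using assms by (simp add: temperature_shift_heat)

lemma feasible_temperature:
  assumes "feasible N K tau gamma rho Ta idc Tmax imax eta smeas Tmeas sbar kbar i s itot e T"
    and "j \<le> K"
  shows "T j = temperature Tmeas tau gamma (\<lambda>j. rho * Ta j) e j"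
  using assms(2) by (induction j) (use assms(1) in \<open>simp_all add: feasible_def\<close>)

lemma feasible_shift_slack:
  assumes feas: "feasible N K tau gamma rho Ta idc Tmax imax eta smeas Tmeas sbar kbar i s itot e T"
    and "tau > 0" and "gamma \<ge> 0" and "l \<le> k" and "k < K" and slack: "(itot l)\<^sup>2 < e l"
  shows "\<exists>e' T'. feasible N K tau gamma rho Ta idc Tmax imax eta smeas Tmeas sbar kbar i s itot e' T'
           \<and> (itot k)\<^sup>2 < e' k"
proof -
  define d where "d = e l - (itot l)\<^sup>2"
  define e' where "e' m = e m - (if m = l then d else 0) + (if m = k then d * tau ^ (k - l) else 0)"
    for m
  define T' where "T' = temperature Tmeas tau gamma (\<lambda>j. rho * Ta j) e'"
  have "d > 0" using slack by (simp add: d_def)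
  have T'_le: "T' j \<le> T j" if "j \<le> K" for j
    unfolding T'_def e'_def feasible_temperature[OF feas that]
    using assms \<open>d > 0\<close> by (intro temperature_shift_heat_le) auto
  have e_ge: "(itot j)\<^sup>2 \<le> e j" if "j < K" for j
    using feas that unfolding feasible_def by blast
  have "e l - d = (itot l)\<^sup>2" by (simp add: d_def)
  moreover have shift_pos: "d * tau ^ (k - l) > 0" using \<open>d > 0\<close> \<open>tau > 0\<close> by simp
  ultimately have e'_ge: "(itot j)\<^sup>2 \<le> e' j" if "j < K" for j
    using e_ge[OF that] by (auto simp: e'_def)
  have "(itot k)\<^sup>2 < e' k"
  proof (cases "l = k")
    case True
    then show ?thesis using slack by (simp add: e'_def)
  next
    case False
    then show ?thesis using e_ge[OF \<open>k < K\<close>] shift_pos by (simp add: e'_def)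
  qed
  moreover have "feasible N K tau gamma rho Ta idc Tmax imax eta smeas Tmeas sbar kbar i s itot e' T'"
  proof -
    have "T' 0 = Tmeas" "T' (Suc j) = tau * T' j + gamma * e' j + rho * Ta j" for j
      by (simp_all add: T'_def)
    moreover have "T' (Suc j) \<le> Tmax" if "j < K" for j
      using T'_le[of "Suc j"] feas that unfolding feasible_def by force
    ultimately show ?thesis
      using feas e'_ge unfolding feasible_def by blast
  qed
  ultimately show ?thesis by blast
qed

text \<open>Lifting the state of charge to at least \<open>a\<close> after step \<open>k\<close> models charging more at
  step \<open>k\<close> and correspondingly less later on.\<close>

definition raise_after :: "nat \<Rightarrow> real \<Rightarrow> (nat \<Rightarrow> real) \<Rightarrow> nat \<Rightarrow> real" where
  "raise_after k a s j = (if k < j then max (s j) a else s j)"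

lemma raise_after_ge: "s j \<le> raise_after k a s j"
  by (simp add: raise_after_def)

lemma raise_after_le: "s j \<le> c \<Longrightarrow> a \<le> c \<Longrightarrow> raise_after k a s j \<le> c"
  by (simp add: raise_after_def)

lemma raise_after_increment:
  assumes "s j \<le> s (Suc j)" and "j \<noteq> k"
  shows "0 \<le> raise_after k a s (Suc j) - raise_after k a s j"
    and "raise_after k a s (Suc j) - raise_after k a s j \<le> s (Suc j) - s j"
  using assms by (auto simp: raise_after_def max_def)

lemma raise_after_increment_at:
  "s (Suc k) \<le> a \<Longrightarrow> raise_after k a s (Suc k) - raise_after k a s k = a - s k"
  by (simp add: raise_after_def)

lemma raise_after_trajectory:
  fixes s u :: "nat \<Rightarrow> real"
  assumes "eta > 0" and "eps \<ge> 0" and "k < K"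
    and dyn: "\<And>j. j < K \<Longrightarrow> s (Suc j) = s j + eta * u j \<and> 0 \<le> u j"
    and v_def: "v = raise_after k (s (Suc k) + eta * eps) s"
  defines "u' \<equiv> \<lambda>j. (v (Suc j) - v j) / eta"
  shows "u' k = u k + eps"
    and "j < K \<Longrightarrow> j \<noteq> k \<Longrightarrow> 0 \<le> u' j \<and> u' j \<le> u j"
proof -
  have "v (Suc k) - v k = eta * u k + eta * eps"
    unfolding v_def using raise_after_increment_at dyn[OF \<open>k < K\<close>] \<open>eta > 0\<close> \<open>eps \<ge> 0\<close> by simp
  then show "u' k = u k + eps"
    using \<open>eta > 0\<close> by (simp add: u'_def field_simps)
  assume "j < K" "j \<noteq> k"
  moreover have "s j \<le> s (Suc j)"
    using dyn[OF \<open>j < K\<close>] \<open>eta > 0\<close> by simp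
  ultimately have "0 \<le> v (Suc j) - v j" "v (Suc j) - v j \<le> eta * u j"
    unfolding v_def using raise_after_increment[of s j k] dyn[OF \<open>j < K\<close>] by simp_all
  then show "0 \<le> u' j \<and> u' j \<le> u j"
    using \<open>eta > 0\<close> by (simp add: u'_def field_simps)
qed

lemma stage_cost_mono:
  fixes q r s s' u u' :: real
  assumes "q \<ge> 0" "r \<ge> 0" "s \<le> s'" "s' \<le> 1" "0 \<le> u'" "u' \<le> u"
  shows "q * (s' - 1)\<^sup>2 + r * u'\<^sup>2 \<le> q * (s - 1)\<^sup>2 + r * u\<^sup>2"
proof -
  have "(s' - 1)\<^sup>2 \<le> (s - 1)\<^sup>2"
    using assms by (simp add: abs_le_square_iff[symmetric])
  moreover have "u'\<^sup>2 \<le> u\<^sup>2"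
    using assms by (simp add: power_mono)
  ultimately show ?thesis
    using assms by (intro add_mono mult_left_mono)
qed

lemma stage_cost_decrease:
  fixes q r eta s u eps :: real
  assumes "eps > 0" and "eps * (q * eta\<^sup>2 + r) < 2 * (q * eta * (1 - s) - r * u)"
  shows "q * (s + eta * eps - 1)\<^sup>2 + r * (u + eps)\<^sup>2 < q * (s - 1)\<^sup>2 + r * u\<^sup>2"
proof -
  have "q * (s - 1)\<^sup>2 + r * u\<^sup>2 - (q * (s + eta * eps - 1)\<^sup>2 + r * (u + eps)\<^sup>2)
      = eps * (2 * (q * eta * (1 - s) - r * u) - eps * (q * eta\<^sup>2 + r))"
    by algebra
  also have "\<dots> > 0"
    using assms by simp
  finally show ?thesis by simp
qed

lemma raise_after_stage_costs_less:
  fixes s u :: "nat \<Rightarrow> real"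
  assumes "q \<ge> 0" and "r \<ge> 0" and "eta > 0" and "eps > 0" and "k < K"
    and dyn: "\<And>j. j < K \<Longrightarrow> s (Suc j) = s j + eta * u j \<and> 0 \<le> u j \<and> s (Suc j) \<le> 1"
    and "s (Suc k) + eta * eps \<le> 1"
    and small: "eps * (q * eta\<^sup>2 + r) < 2 * (q * eta * (1 - s (Suc k)) - r * u k)"
    and v_def: "v = raise_after k (s (Suc k) + eta * eps) s"
  defines "u' \<equiv> \<lambda>j. (v (Suc j) - v j) / eta"
  shows "(\<Sum>j<K. q * (v (Suc j) - 1)\<^sup>2 + r * (u' j)\<^sup>2) < (\<Sum>j<K. q * (s (Suc j) - 1)\<^sup>2 + r * (u j)\<^sup>2)"
proof -
  have u'_eq: "u' j = (v (Suc j) - v j) / eta" for j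
    by (simp add: u'_def)
  have soc_step: "\<And>j. j < K \<Longrightarrow> s (Suc j) = s j + eta * u j \<and> 0 \<le> u j"
    using dyn by blast
  have u'_k: "u' k = u k + eps" and u'_le: "\<And>j. j < K \<Longrightarrow> j \<noteq> k \<Longrightarrow> 0 \<le> u' j \<and> u' j \<le> u j"
    using raise_after_trajectory[OF \<open>eta > 0\<close> _ \<open>k < K\<close> soc_step v_def] \<open>eps > 0\<close>
    by (auto simp: u'_eq)
  have stage_k: "q * (v (Suc k) - 1)\<^sup>2 + r * (u' k)\<^sup>2 < q * (s (Suc k) - 1)\<^sup>2 + r * (u k)\<^sup>2"
    using stage_cost_decrease[OF \<open>eps > 0\<close> small] u'_k \<open>eta > 0\<close> \<open>eps > 0\<close>
    by (simp add: v_def raise_after_def)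
  have "q * (v (Suc j) - 1)\<^sup>2 + r * (u' j)\<^sup>2 \<le> q * (s (Suc j) - 1)\<^sup>2 + r * (u j)\<^sup>2"
    if "j < K" for j
  proof (cases "j = k")
    case True
    then show ?thesis using stage_k by simp
  next
    case False
    have "s (Suc j) \<le> 1"
      using dyn[OF that] by blast
    then have "s (Suc j) \<le> v (Suc j)" "v (Suc j) \<le> 1"
      unfolding v_def using raise_after_ge raise_after_le \<open>s (Suc k) + eta * eps \<le> 1\<close> by auto
    then show ?thesis
      using u'_le[OF that False] assms(1,2) by (intro stage_cost_mono) auto
  qed
  then show ?thesis
    using stage_k \<open>k < K\<close> by (intro sum_strict_mono_ex1) auto
qed

lemma sum_fun_upd_apply:
  fixes f :: "'a \<Rightarrow> 'b \<Rightarrow> 'c::ab_group_add"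
  assumes "finite A" and "n \<in> A"
  shows "(\<Sum>m\<in>A. (f(n := g)) m j) = (\<Sum>m\<in>A. f m j) - f n j + g j"
proof -
  have "(\<Sum>m\<in>A - {n}. (f(n := g)) m j) = (\<Sum>m\<in>A - {n}. f m j)"
    by (rule sum.cong) auto
  then show ?thesis
    using assms by (simp add: sum.remove)
qed

lemma cost_fun_upd_less:
  assumes "n < N"
    and "(\<Sum>j<K. q n * (v (Suc j) - 1)\<^sup>2 + r n * (u j)\<^sup>2)
         < (\<Sum>j<K. q n * (s n (Suc j) - 1)\<^sup>2 + r n * (i n j)\<^sup>2)"
  shows "cost N K q r (i(n := u)) (s(n := v)) < cost N K q r i s"
proof -
  have "(\<Sum>m\<in>{..<N} - {n}. \<Sum>j<K. q m * ((s(n := v)) m (Suc j) - 1)\<^sup>2 + r m * ((i(n := u)) m j)\<^sup>2)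
      = (\<Sum>m\<in>{..<N} - {n}. \<Sum>j<K. q m * (s m (Suc j) - 1)\<^sup>2 + r m * (i m j)\<^sup>2)"
    by (rule sum.cong) auto
  then show ?thesis
    using assms by (simp add: cost_def sum.remove)
qed

lemma feasible_fun_upd:
  assumes feas: "feasible N K tau gamma rho Ta idc Tmax imax eta smeas Tmeas sbar kbar i s itot e T"
    and "n < N" and "v 0 = s n 0"
    and traj: "\<And>j. j < K \<Longrightarrow> v (Suc j) = v j + eta n * u j \<and> s n (Suc j) \<le> v (Suc j)
                 \<and> v (Suc j) \<le> 1 \<and> 0 \<le> u j \<and> u j \<le> imax n"
    and heat: "\<And>j. j < K \<Longrightarrow> (idc j + (\<Sum>m<N. (i(n := u)) m j))\<^sup>2 \<le> e j"
  shows "feasible N K tau gamma rho Ta idc Tmax imax eta smeas Tmeas sbar kbar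
           (i(n := u)) (s(n := v)) (\<lambda>j. idc j + (\<Sum>m<N. (i(n := u)) m j)) e T"
proof -
  have ev: "(s(n := v)) m (Suc j) = (s(n := v)) m j + eta m * (i(n := u)) m j
      \<and> shat sbar kbar m (Suc j) \<le> (s(n := v)) m (Suc j) \<and> (s(n := v)) m (Suc j) \<le> 1
      \<and> 0 \<le> (i(n := u)) m j \<and> (i(n := u)) m j \<le> imax m" if "m < N" "j < K" for m j
  proof -
    have "s m (Suc j) = s m j + eta m * i m j \<and> shat sbar kbar m (Suc j) \<le> s m (Suc j)
        \<and> s m (Suc j) \<le> 1 \<and> 0 \<le> i m j \<and> i m j \<le> imax m"
      using feas that unfolding feasible_def by blast
    then show ?thesis
      using traj[OF that(2)] by (cases "m = n") auto
  qed
  moreover have "(s(n := v)) m 0 = smeas m" if "m < N" for m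
    using feas that \<open>v 0 = s n 0\<close> \<open>n < N\<close> unfolding feasible_def by simp
  ultimately show ?thesis
    using feas heat unfolding feasible_def by blast
qed

lemma total_current_fun_upd_sq_le:
  assumes feas: "feasible N K tau gamma rho Ta idc Tmax imax eta smeas Tmeas sbar kbar i s itot e T"
    and "n < N" and "j < K" and "idc j \<ge> 0" and "0 \<le> u j" and "u j \<le> i n j + c"
    and "(itot j + c)\<^sup>2 \<le> e j"
  shows "(idc j + (\<Sum>m<N. (i(n := u)) m j))\<^sup>2 \<le> e j"
proof -
  have itot: "itot j = idc j + (\<Sum>m<N. i m j)" and "\<forall>m<N. 0 \<le> i m j"
    using feas \<open>j < K\<close> unfolding feasible_def by blast+
  then have "0 \<le> idc j + (\<Sum>m<N. (i(n := u)) m j)"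
    using assms(4,5) by (intro add_nonneg_nonneg sum_nonneg) auto
  moreover have "idc j + (\<Sum>m<N. (i(n := u)) m j) \<le> itot j + c"
    using itot assms(2,6) by (simp add: sum_fun_upd_apply del: fun_upd_apply)
  ultimately show ?thesis
    using assms(7) by (meson order_trans power_mono)
qed

lemma small_increase_exists:
  fixes u umax s eta t E D G :: real
  assumes "u < umax" and "s < 1" and "t\<^sup>2 < E" and "G > 0"
  shows "\<exists>eps>0. u + eps < umax \<and> s + eta * eps < 1 \<and> (t + eps)\<^sup>2 < E \<and> eps * D < 2 * G"
proof -
  have "\<forall>\<^sub>F eps in at_right 0. u + eps < umax"
    by (rule order_tendstoD(2)[OF _ \<open>u < umax\<close>]) (auto intro!: tendsto_eq_intros)
  moreover have "\<forall>\<^sub>F eps in at_right 0. s + eta * eps < 1"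
    by (rule order_tendstoD(2)[OF _ \<open>s < 1\<close>]) (auto intro!: tendsto_eq_intros)
  moreover have "\<forall>\<^sub>F eps in at_right 0. (t + eps)\<^sup>2 < E"
    by (rule order_tendstoD(2)[OF _ \<open>t\<^sup>2 < E\<close>]) (auto intro!: tendsto_eq_intros)
  moreover have "\<forall>\<^sub>F eps in at_right 0. eps * D < 2 * G"
    by (rule order_tendstoD(2)[of _ 0]) (auto intro!: tendsto_eq_intros simp: \<open>G > 0\<close>)
  moreover have "\<forall>\<^sub>F eps in at_right (0::real). eps > 0"
    by (simp add: eventually_at_right_less)
  ultimately have "\<forall>\<^sub>F eps in at_right (0::real).
      eps > 0 \<and> u + eps < umax \<and> s + eta * eps < 1 \<and> (t + eps)\<^sup>2 < E \<and> eps * D < 2 * G"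
    by eventually_elim auto
  then show ?thesis
    using eventually_happens by force
qed

lemma feasible_raise_after:
  assumes feas: "feasible N K tau gamma rho Ta idc Tmax imax eta smeas Tmeas sbar kbar i s itot e T"
    and "n < N" and "k < K" and "eta n > 0" and "\<And>j. idc j \<ge> 0" and "eps > 0"
    and "i n k + eps \<le> imax n" and "s n (Suc k) + eta n * eps \<le> 1" and "(itot k + eps)\<^sup>2 \<le> e k"
    and v_def: "v = raise_after k (s n (Suc k) + eta n * eps) (s n)"
    and u_def: "\<And>j. u j = (v (Suc j) - v j) / eta n"
  shows "feasible N K tau gamma rho Ta idc Tmax imax eta smeas Tmeas sbar kbar
           (i(n := u)) (s(n := v)) (\<lambda>j. idc j + (\<Sum>m<N. (i(n := u)) m j)) e T"
proof (rule feasible_fun_upd[OF feas \<open>n < N\<close>])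
  have ev: "s n (Suc j) = s n j + eta n * i n j \<and> 0 \<le> i n j \<and> s n (Suc j) \<le> 1
      \<and> i n j \<le> imax n \<and> (itot j)\<^sup>2 \<le> e j" if "j < K" for j
    using feas that \<open>n < N\<close> unfolding feasible_def by blast
  have u_k: "u k = i n k + eps"
    and u_le: "\<And>j. j < K \<Longrightarrow> j \<noteq> k \<Longrightarrow> 0 \<le> u j \<and> u j \<le> i n j"
    using raise_after_trajectory[OF \<open>eta n > 0\<close> _ \<open>k < K\<close> _ v_def, of "i n"] ev \<open>eps > 0\<close>
    by (auto simp: u_def)
  show "v 0 = s n 0" by (simp add: v_def raise_after_def)
  fix j assume "j < K"
  show "(idc j + (\<Sum>m<N. (i(n := u)) m j))\<^sup>2 \<le> e j"
  proof (cases "j = k")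
    case True
    then show ?thesis using total_current_fun_upd_sq_le[OF feas \<open>n < N\<close> \<open>j < K\<close>, of u eps]
      u_k ev[OF \<open>j < K\<close>] assms(5,6,9) by simp
  next
    case False
    then show ?thesis using total_current_fun_upd_sq_le[OF feas \<open>n < N\<close> \<open>j < K\<close>, of u 0]
      u_le[OF \<open>j < K\<close>] ev[OF \<open>j < K\<close>] assms(5) by simp
  qed
  have "s n (Suc j) \<le> 1" using ev[OF \<open>j < K\<close>] by blast
  then have "s n (Suc j) \<le> v (Suc j) \<and> v (Suc j) \<le> 1"
    unfolding v_def using raise_after_ge raise_after_le assms(8) by auto
  moreover have "0 \<le> u j \<and> u j \<le> imax n"
    using u_k u_le[OF \<open>j < K\<close>] ev[OF \<open>j < K\<close>] assms(6,7) by (cases "j = k") auto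
  ultimately show "v (Suc j) = v j + eta n * u j \<and> s n (Suc j) \<le> v (Suc j) \<and> v (Suc j) \<le> 1
      \<and> 0 \<le> u j \<and> u j \<le> imax n"
    using \<open>eta n > 0\<close> by (simp add: u_def)
qed

lemma feasible_boost_charging:
  assumes feas: "feasible N K tau gamma rho Ta idc Tmax imax eta smeas Tmeas sbar kbar i s itot e T"
    and "n < N" and "k < K" and "eta n > 0" and "q n \<ge> 0" and "r n \<ge> 0" and "\<And>j. idc j \<ge> 0"
    and slack: "(itot k)\<^sup>2 < e k" and "i n k < imax n" and "s n (Suc k) < 1"
    and benefit: "r n * i n k < q n * eta n * (1 - s n (Suc k))"
  shows "\<exists>i' s' itot'.
           feasible N K tau gamma rho Ta idc Tmax imax eta smeas Tmeas sbar kbar i' s' itot' e T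
           \<and> cost N K q r i' s' < cost N K q r i s"
proof -
  obtain eps where "eps > 0" and "i n k + eps < imax n" and "s n (Suc k) + eta n * eps < 1"
    and "(itot k + eps)\<^sup>2 < e k"
    and eps_small: "eps * (q n * (eta n)\<^sup>2 + r n) < 2 * (q n * eta n * (1 - s n (Suc k)) - r n * i n k)"
    using small_increase_exists[where u = "i n k" and umax = "imax n" and s = "s n (Suc k)"
        and eta = "eta n" and t = "itot k" and E = "e k" and D = "q n * (eta n)\<^sup>2 + r n"
        and G = "q n * eta n * (1 - s n (Suc k)) - r n * i n k"]
      assms by auto
  define v where "v = raise_after k (s n (Suc k) + eta n * eps) (s n)"
  define u where "u j = (v (Suc j) - v j) / eta n" for j
  have "feasible N K tau gamma rho Ta idc Tmax imax eta smeas Tmeas sbar kbar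
      (i(n := u)) (s(n := v)) (\<lambda>j. idc j + (\<Sum>m<N. (i(n := u)) m j)) e T"
    using \<open>i n k + eps < imax n\<close> \<open>s n (Suc k) + eta n * eps < 1\<close> \<open>(itot k + eps)\<^sup>2 < e k\<close>
    by (intro feasible_raise_after[OF feas \<open>n < N\<close> \<open>k < K\<close> \<open>eta n > 0\<close> assms(7) \<open>eps > 0\<close> _ _ _
          v_def u_def]) simp_all
  moreover have "cost N K q r (i(n := u)) (s(n := v)) < cost N K q r i s"
  proof (rule cost_fun_upd_less[OF \<open>n < N\<close>])
    have "\<And>j. j < K \<Longrightarrow> s n (Suc j) = s n j + eta n * i n j \<and> 0 \<le> i n j \<and> s n (Suc j) \<le> 1"
      using feas \<open>n < N\<close> unfolding feasible_def by blast
    from raise_after_stage_costs_less[OF assms(5,6,4) \<open>eps > 0\<close> \<open>k < K\<close> this _ eps_small v_def]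
    show "(\<Sum>j<K. q n * (v (Suc j) - 1)\<^sup>2 + r n * (u j)\<^sup>2)
        < (\<Sum>j<K. q n * (s n (Suc j) - 1)\<^sup>2 + r n * (i n j)\<^sup>2)"
      using \<open>s n (Suc k) + eta n * eps < 1\<close> by (simp add: u_def)
  qed
  ultimately show ?thesis by blast
qed

text \<open>\<open>q * eta * (1 - s) - r * u\<close> is minus half the derivative of the stage cost
  \<open>q * (s - 1)\<^sup>2 + r * u\<^sup>2\<close> when the current \<open>u\<close> is increased and \<open>s\<close> grows with it at
  rate \<open>eta\<close>.\<close>

lemma marginal_benefit_pos:
  fixes q r eta s0 s u :: real
  assumes "q > 0" and "eta > 0" and "r \<ge> 0" and "s0 \<le> 1" and "s0 + eta * u \<le> s"
    and bound: "s < (if r = 0 then 1 else (q / r * eta\<^sup>2 + s0) / (q / r * eta\<^sup>2 + 1))"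
  shows "s < 1 \<and> r * u < q * eta * (1 - s)"
proof (cases "r = 0")
  case True
  then show ?thesis using bound assms by simp
next
  case False
  define M where "M = q / r * eta\<^sup>2"
  have "r > 0" using False assms by simp
  then have "M > 0" using assms by (simp add: M_def)
  have "s < (M + s0) / (M + 1)"
    using bound False by (simp add: M_def)
  then have "s * (M + 1) < M + s0"
    using \<open>M > 0\<close> by (simp add: pos_less_divide_eq)
  then have "eta * u < M * (1 - s)" and "0 < (1 - s) * (M + 1)"
    using assms by (simp_all add: algebra_simps)
  from this(2) have "s < 1"
    using \<open>M > 0\<close> by (simp add: zero_less_mult_iff)
  from \<open>eta * u < M * (1 - s)\<close> have "eta * (r * u) < eta * (q * eta * (1 - s))"
    using \<open>r > 0\<close> by (simp add: M_def power2_eq_square field_simps)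
  then show ?thesis
    using \<open>s < 1\<close> \<open>eta > 0\<close> by simp
qed

lemma feasible_soc_ge_initial:
  assumes "feasible N K tau gamma rho Ta idc Tmax imax eta smeas Tmeas sbar kbar i s itot e T"
    and "m < N" and "eta m \<ge> 0" and "j \<le> K"
  shows "s m 0 \<le> s m j"
  using assms(4)
proof (induction j)
  case 0
  then show ?case by simp
next
  case (Suc j)
  then have "s m j \<le> s m (Suc j)"
    using assms(1-3) unfolding feasible_def by simp
  then show ?case using Suc by simp
qed

theorem theorem1:
  fixes N K :: nat and b dt tau gamma rho Tmax Tmeas :: real
    and Ta idc imax eta smeas sbar q r :: "nat \<Rightarrow> real" and kbar :: "nat \<Rightarrow> nat"
    and i s :: "nat \<Rightarrow> nat \<Rightarrow> real" and itot e T :: "nat \<Rightarrow> real"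
    and n k :: nat
  assumes "b > 0" and "dt > 0" and "tau = exp (- b * dt)" and "rho = 1 - tau"
    and "gamma > 0"
    and "\<And>k. idc k \<ge> 0"
    and "\<And>m. m < N \<Longrightarrow> imax m > 0"
    and "\<And>m. m < N \<Longrightarrow> eta m > 0"
    and "\<And>m. m < N \<Longrightarrow> q m > 0"
    and "\<And>m. m < N \<Longrightarrow> r m \<ge> 0"
    and "\<And>m. m < N \<Longrightarrow> 0 \<le> smeas m \<and> smeas m \<le> 1"
    and "\<And>m. m < N \<Longrightarrow> 0 \<le> sbar m \<and> sbar m \<le> 1"
    and "\<And>m. m < N \<Longrightarrow> kbar m \<le> K"
    and opt: "optimal N K tau gamma rho Ta idc Tmax imax eta smeas Tmeas sbar kbar q r i s itot e T"
    and "n < N" and "k < K"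
    and "i n k < imax n"
    and "s n (Suc k) <
           (if r n = 0 then 1
            else (q n / r n * (eta n)\<^sup>2 + s n 0) / (q n / r n * (eta n)\<^sup>2 + 1))"
  shows "\<forall>l\<le>k. e l = (itot l)\<^sup>2"
proof (rule ccontr)
  assume "\<not> ?thesis"
  then obtain l where "l \<le> k" and "e l \<noteq> (itot l)\<^sup>2" by auto
  have feas: "feasible N K tau gamma rho Ta idc Tmax imax eta smeas Tmeas sbar kbar i s itot e T"
    using opt unfolding optimal_def by blast
  have "tau > 0" using \<open>tau = exp (- b * dt)\<close> by simp
  have "(itot l)\<^sup>2 \<le> e l"
    using feas \<open>l \<le> k\<close> \<open>k < K\<close> unfolding feasible_def by (meson le_less_trans)
  then have "(itot l)\<^sup>2 < e l"
    using \<open>e l \<noteq> (itot l)\<^sup>2\<close> by simp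
  then obtain e' T' where feas': "feasible N K tau gamma rho Ta idc Tmax imax eta smeas Tmeas
      sbar kbar i s itot e' T'" and "(itot k)\<^sup>2 < e' k"
    using feasible_shift_slack[OF feas \<open>tau > 0\<close> _ \<open>l \<le> k\<close> \<open>k < K\<close>] \<open>gamma > 0\<close> by auto
  have "s n 0 + eta n * i n k \<le> s n (Suc k)"
    using feasible_soc_ge_initial[OF feas, of n k] feas assms \<open>n < N\<close> \<open>k < K\<close>
    unfolding feasible_def by force
  moreover have "s n 0 \<le> 1"
    using feas assms(11) \<open>n < N\<close> unfolding feasible_def by simp
  ultimately have "s n (Suc k) < 1 \<and> r n * i n k < q n * eta n * (1 - s n (Suc k))"
    using marginal_benefit_pos assms(8-10) assms(18) \<open>n < N\<close> by blast
  then obtain i' s' itot' where "feasible N K tau gamma rho Ta idc Tmax imax eta smeas Tmeas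
      sbar kbar i' s' itot' e' T'" and "cost N K q r i' s' < cost N K q r i s"
    using feasible_boost_charging[OF feas' \<open>n < N\<close> \<open>k < K\<close> _ _ _ _ \<open>(itot k)\<^sup>2 < e' k\<close>]
      assms by (metis less_imp_le)
  with opt show False
    unfolding optimal_def by (meson not_le)
qed

end
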